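(* Let $t\ge 2$, $q\ge 1$ and $s_1,\dots,s_t\ge 3$ be integers, let $G=K_1\vee(C_{s_1}\cup\cdots\cup C_{s_t}\cup qK_2)$ have $n$ vertices, and let $H$ be a simple graph with the same $Q$-spectrum as $G$. If $n\ge 52$ or $q\ge 12$, then $G$ and $H$ have the same degree sequence.
   Context: Graphs are simple. $K_1\vee H$ adds one vertex adjacent to every vertex of $H$; $\cup$ is disjoint union; $qK_2$ is $q$ disjoint edges; $C_s$ is the cycle on $s$ vertices. The $Q$-spectrum is the multiset of eigenvalues of $Q=A+D$ (adjacency matrix plus diagonal degree matrix). *)

theory Defs
  imports "Jordan_Normal_Form.Char_Poly" "HOL-Library.Multiset"
begin

text \<open>A graph is given by its number of vertices n (vertex set {0..<n}) and an adjacency relation.\<close>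
type_synonym graph = "nat \<times> (nat \<Rightarrow> nat \<Rightarrow> bool)"

definition simple_graph :: "graph \<Rightarrow> bool" where
  "simple_graph G \<longleftrightarrow> (\<forall>i j. snd G i j \<longrightarrow> i < fst G \<and> j < fst G \<and> i \<noteq> j \<and> snd G j i)"

definition degree :: "graph \<Rightarrow> nat \<Rightarrow> nat" where
  "degree G i = card {j. j < fst G \<and> snd G i j}"

definition degree_mset :: "graph \<Rightarrow> nat multiset" where
  "degree_mset G = mset (map (degree G) [0..<fst G])"

definition Q_matrix :: "graph \<Rightarrow> real mat" where
  "Q_matrix G = mat (fst G) (fst G)
     (\<lambda>(i,j). (if snd G i j then 1 else 0) + (if i = j then real (degree G i) else 0))"

definition Q_spectrum :: "graph \<Rightarrow> real multiset" where
  "Q_spectrum G = proots (char_poly (Q_matrix G))"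

definition join_K1 :: "graph \<Rightarrow> graph" where
  "join_K1 G = (Suc (fst G), \<lambda>i j.
      (i = 0 \<and> 0 < j \<and> j \<le> fst G) \<or> (j = 0 \<and> 0 < i \<and> i \<le> fst G) \<or>
      (0 < i \<and> 0 < j \<and> snd G (i - 1) (j - 1)))"

definition disj_union :: "graph \<Rightarrow> graph \<Rightarrow> graph" where
  "disj_union G1 G2 = (fst G1 + fst G2, \<lambda>i j.
      (i < fst G1 \<and> j < fst G1 \<and> snd G1 i j) \<or>
      (fst G1 \<le> i \<and> fst G1 \<le> j \<and> snd G2 (i - fst G1) (j - fst G1)))"

definition empty_graph :: graph where
  "empty_graph = (0, \<lambda>i j. False)"

definition cycle_graph :: "nat \<Rightarrow> graph" where
  "cycle_graph s = (s, \<lambda>i j. i < s \<and> j < s \<and> (j = (i + 1) mod s \<or> i = (j + 1) mod s))"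

definition K2 :: graph where
  "K2 = (2, \<lambda>i j. i < 2 \<and> j < 2 \<and> i \<noteq> j)"

definition union_list :: "graph list \<Rightarrow> graph" where
  "union_list Gs = foldr disj_union Gs empty_graph"

end

theory Submission
  imports Defs
begin

(*
  Q-cospectral graphs have the same number of vertices, the same degree sum (the trace of Q) and
  the same sum of d^2 + d over all degrees d (the trace of Q^2).

  Let G be the join of K_1 with U = C_s1 u ... u C_st u qK_2, so that every vertex of U has degree
  1 or 2. The test vector (n - 1, 1, ..., 1) shows that Q(G) has an eigenvalue at least n, and on
  the hyperplane x_0 = 0 the quadratic form of Q(G) is at most 5 |x|^2, so at most one eigenvalue
  exceeds 5. A graph H with this spectrum cannot have two vertices of degree at least 7, since on
  the coordinate plane they span the form exceeds 5 |x|^2. If H had no vertex of degree n - 1,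
  then weighting the unique high-degree vertex by 1 and all others by 1/(n - 45/4) would bound
  every weighted row sum of Q(H) by n - 1/4 once n >= 24, contradicting the eigenvalue at least n.
  So both degree multisets consist of n - 1 together with a remainder of equal size, sum and sum
  of squares; one remainder lies in {2, 3}, and as (d - 2)(d - 3) >= 0 for all integers d, with
  equality only on {2, 3}, the remainders coincide.
*)

section \<open>Orthogonal diagonalization of real symmetric matrices\<close>

lemma scalar_prod_self_gt_0:
  fixes v :: "real vec"
  assumes "v \<in> carrier_vec n" and "v \<noteq> 0\<^sub>v n"
  shows "v \<bullet> v > 0"
  using conjugate_square_greater_0_vec[OF assms(1)] assms(2) by simp

lemma scalar_prod_self_eq_sum_squares:
  "(v :: real vec) \<in> carrier_vec n \<Longrightarrow> v \<bullet> v = (\<Sum>i = 0..<n. (v $ i)\<^sup>2)"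
  unfolding scalar_prod_def by (simp add: power2_eq_square)

definition householder_mat :: "nat \<Rightarrow> (nat \<Rightarrow> real) \<Rightarrow> real mat" where
  "householder_mat n w =
     mat n n (\<lambda>(i, j). (if i = j then 1 else 0) - 2 * w i * w j / (\<Sum>k = 0..<n. w k * w k))"

lemma householder_mat_orthogonal:
  assumes s: "(\<Sum>k = 0..<n. w k * w k) \<noteq> 0"
  shows "transpose_mat (householder_mat n w) * householder_mat n w = 1\<^sub>m n"
proof (rule eq_matI)
  let ?s = "\<Sum>k = 0..<n. w k * w k"
  fix i j assume "i < dim_row (1\<^sub>m n)" "j < dim_col (1\<^sub>m n)"
  then have i: "i < n" and j: "j < n" by auto
  have "(transpose_mat (householder_mat n w) * householder_mat n w) $$ (i, j) =
    (\<Sum>k = 0..<n. ((if k = i then 1 else 0) - 2 * w k * w i / ?s) * ((if k = j then 1 else 0) - 2 * w k * w j / ?s))"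
    using i j by (auto simp: householder_mat_def scalar_prod_def intro: sum.cong)
  also have "\<dots> = (\<Sum>k = 0..<n. (if k = i then (if k = j then 1 else 0) - 2 * w k * w j / ?s else 0)
      - (if k = j then 2 * w k * w i / ?s else 0) + 4 * w i * w j / (?s * ?s) * (w k * w k))"
    by (rule sum.cong) (auto simp: algebra_simps)
  also have "\<dots> = (\<Sum>k = 0..<n. if k = i then (if k = j then 1 else 0) - 2 * w k * w j / ?s else 0)
      - (\<Sum>k = 0..<n. if k = j then 2 * w k * w i / ?s else 0) + 4 * w i * w j / (?s * ?s) * ?s"
    by (simp only: sum.distrib sum_subtractf sum_distrib_left)
  also have "\<dots> = 1\<^sub>m n $$ (i, j)"
    using i j s by (simp add: field_simps)
  finally show "(transpose_mat (householder_mat n w) * householder_mat n w) $$ (i, j) = 1\<^sub>m n $$ (i, j)" .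
qed (auto simp: householder_mat_def)

lemma eq_unit_vec_0_if_unit:
  fixes v :: "real vec"
  assumes v: "v \<in> carrier_vec n" and unit: "v \<bullet> v = 1" and v0: "v $ 0 = 1" and n: "0 < n"
  shows "v = unit_vec n 0"
proof -
  have "(\<Sum>i = 0..<n. (v $ i)\<^sup>2) = (v $ 0)\<^sup>2 + (\<Sum>i = 1..<n. (v $ i)\<^sup>2)"
    using n by (simp add: sum.atLeast_Suc_lessThan)
  with unit v0 v have "(\<Sum>i = 1..<n. (v $ i)\<^sup>2) = 0"
    by (simp add: scalar_prod_self_eq_sum_squares)
  then have "\<forall>i \<in> {1..<n}. v $ i = 0"
    by (subst (asm) sum_nonneg_eq_0_iff) auto
  then show ?thesis
    using v v0 by (intro eq_vecI) (auto simp: unit_vec_def)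
qed

lemma householder_reflection:
  fixes v :: "real vec"
  assumes v: "v \<in> carrier_vec n" and unit: "v \<bullet> v = 1" and n: "0 < n"
  obtains W where "W \<in> carrier_mat n n" "transpose_mat W * W = 1\<^sub>m n" "col W 0 = v"
proof (cases "v $ 0 = 1")
  case True
  then show ?thesis
    using eq_unit_vec_0_if_unit[OF v unit True n] n by (intro that[of "1\<^sub>m n"]) auto
next
  case False
  define w where "w i = (if i = 0 then 1 else 0) - v $ i" for i
  have "(\<Sum>k = 0..<n. w k * w k) = (\<Sum>k = 0..<n. (if k = 0 then 1 - 2 * v $ 0 else 0) + (v $ k)\<^sup>2)"
    by (rule sum.cong) (auto simp: w_def power2_eq_square algebra_simps)
  also have "\<dots> = 2 * w 0"
    using n unit v by (simp add: sum.distrib scalar_prod_self_eq_sum_squares w_def)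
  finally have ww: "(\<Sum>k = 0..<n. w k * w k) = 2 * w 0" .
  have w0: "w 0 \<noteq> 0"
    using False by (simp add: w_def)
  have "col (householder_mat n w) 0 $ i = (if i = 0 then 1 else 0) - w i" if "i < n" for i
    using that n w0 by (simp add: householder_mat_def ww)
  then have "col (householder_mat n w) 0 = v"
    using v n by (intro eq_vecI) (auto simp: w_def householder_mat_def)
  then show ?thesis
    using householder_mat_orthogonal[of w n] ww w0 by (intro that[of "householder_mat n w"]) (auto simp: householder_mat_def)
qed

lemma symmetric_mat_complex_eigenvalue_real:
  fixes A :: "real mat"
  assumes A: "A \<in> carrier_mat n n" and sym: "transpose_mat A = A"
    and ev: "eigenvector (map_mat complex_of_real A) v a"
  shows "a \<in> \<real>"
proof -
  have v: "v \<in> carrier_vec n" "v \<noteq> 0\<^sub>v n"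
    and Av: "map_mat complex_of_real A *\<^sub>v v = a \<cdot>\<^sub>v v"
    using ev A unfolding eigenvector_def by auto
  have row: "(\<Sum>j = 0..<n. of_real (A $$ (i, j)) * v $ j) = a * v $ i" if "i < n" for i
    using arg_cong[OF Av, of "\<lambda>u. u $ i"] that A v by (simp add: scalar_prod_def)
  define s where "s = (\<Sum>i = 0..<n. \<Sum>j = 0..<n. cnj (v $ i) * of_real (A $$ (i, j)) * v $ j)"
  define T where "T = (\<Sum>i = 0..<n. (cmod (v $ i))\<^sup>2)"
  have "s = (\<Sum>i = 0..<n. cnj (v $ i) * (a * v $ i))"
    unfolding s_def by (rule sum.cong) (simp_all add: row mult.assoc flip: sum_distrib_left)
  also have "\<dots> = a * of_real T"
    by (simp add: T_def sum_distrib_left mult_ac flip: complex_norm_square)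
  finally have s: "s = a * of_real T" .
  have A_sym: "A $$ (i, j) = A $$ (j, i)" if "i < n" "j < n" for i j
    using that A by (metis carrier_matD index_transpose_mat(1) sym)
  have "cnj s = (\<Sum>j = 0..<n. \<Sum>i = 0..<n. cnj (v $ j) * of_real (A $$ (i, j)) * v $ i)"
    unfolding s_def by (subst sum.swap) (simp add: mult_ac)
  also have "\<dots> = s"
    unfolding s_def by (intro sum.cong refl) (simp add: A_sym)
  finally have "cnj a * of_real T = a * of_real T"
    by (simp add: s)
  moreover obtain i where "i < n" "v $ i \<noteq> 0"
    using v by (metis eq_vecI carrier_vecD index_zero_vec)
  then have "T > 0"
    unfolding T_def by (intro sum_pos2[of _ i]) auto
  ultimately show ?thesis
    by (simp add: Reals_cnj_iff)
qed

lemma symmetric_mat_unit_eigenvector: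
  fixes A :: "real mat"
  assumes A: "A \<in> carrier_mat n n" and sym: "transpose_mat A = A" and n: "0 < n"
  obtains l v where "v \<in> carrier_vec n" "v \<bullet> v = 1" "A *\<^sub>v v = l \<cdot>\<^sub>v v"
proof -
  let ?Ac = "map_mat complex_of_real A"
  have Ac: "?Ac \<in> carrier_mat n n" using A by simp
  obtain as where cp: "char_poly ?Ac = (\<Prod>a \<leftarrow> as. [:- a, 1:])" and "length as = n"
    using char_poly_factorized[OF Ac] by blast
  then obtain a as' where "as = a # as'" using n by (cases as) auto
  then have "eigenvalue ?Ac a"
    using cp eigenvalue_root_char_poly[OF Ac] by simp
  then obtain v where "eigenvector ?Ac v a" unfolding eigenvalue_def by blast
  then obtain r where r: "a = of_real r"
    using symmetric_mat_complex_eigenvalue_real[OF A sym] by (metis Reals_cases)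
  have "complex_of_real (poly (char_poly A) r) = 0"
    using \<open>eigenvalue ?Ac a\<close> eigenvalue_root_char_poly[OF Ac]
    by (simp add: r of_real_hom.char_poly_hom[OF A] of_real_hom.poly_map_poly)
  then have "eigenvalue A r"
    using eigenvalue_root_char_poly[OF A] by simp
  then obtain u where "eigenvector A u r" unfolding eigenvalue_def by blast
  then have u: "u \<in> carrier_vec n" "u \<noteq> 0\<^sub>v n" "A *\<^sub>v u = r \<cdot>\<^sub>v u"
    using A unfolding eigenvector_def by auto
  define k where "k = 1 / sqrt (u \<bullet> u)"
  have "k * (k * (u \<bullet> u)) = 1"
    using scalar_prod_self_gt_0[OF u(1,2)] by (simp add: k_def field_simps)
  then show ?thesis
    using u A by (intro that[of "k \<cdot>\<^sub>v u" r])
      (auto simp: smult_scalar_prod_distrib scalar_prod_smult_distrib mult_mat_vec smult_smult_assoc mult.commute)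
qed

definition block_diag :: "'a :: zero \<Rightarrow> 'a mat \<Rightarrow> 'a mat" where
  "block_diag c M = mat (Suc (dim_row M)) (Suc (dim_col M))
     (\<lambda>(i, j). if i = 0 \<and> j = 0 then c else if i = 0 \<or> j = 0 then 0 else M $$ (i - 1, j - 1))"

lemma block_diag_carrier [simp]: "M \<in> carrier_mat a b \<Longrightarrow> block_diag c M \<in> carrier_mat (Suc a) (Suc b)"
  by (simp add: block_diag_def)

lemma dim_block_diag [simp]:
  "dim_row (block_diag c M) = Suc (dim_row M)" "dim_col (block_diag c M) = Suc (dim_col M)"
  by (simp_all add: block_diag_def)

lemma index_block_diag:
  "i < Suc (dim_row M) \<Longrightarrow> j < Suc (dim_col M) \<Longrightarrow> block_diag c M $$ (i, j) =
     (if i = 0 \<and> j = 0 then c else if i = 0 \<or> j = 0 then 0 else M $$ (i - 1, j - 1))"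
  by (simp add: block_diag_def)

lemma block_diag_mult:
  fixes M :: "'a :: semiring_0 mat"
  assumes M: "M \<in> carrier_mat a b" and N: "N \<in> carrier_mat b d"
  shows "block_diag c M * block_diag e N = block_diag (c * e) (M * N)"
proof (rule eq_matI)
  fix i j assume "i < dim_row (block_diag (c * e) (M * N))" "j < dim_col (block_diag (c * e) (M * N))"
  then have i: "i < Suc a" and j: "j < Suc d" using M N by auto
  have "(block_diag c M * block_diag e N) $$ (i, j) =
      (\<Sum>k = 0..<Suc b. block_diag c M $$ (i, k) * block_diag e N $$ (k, j))"
    using i j M N by (simp add: scalar_prod_def)
  also have "\<dots> = block_diag c M $$ (i, 0) * block_diag e N $$ (0, j)
      + (\<Sum>k = 0..<b. block_diag c M $$ (i, Suc k) * block_diag e N $$ (Suc k, j))"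
    by (subst sum.atLeast0_lessThan_Suc_shift) simp
  also have "\<dots> = block_diag (c * e) (M * N) $$ (i, j)"
    using i j M N by (cases i; cases j) (simp_all add: index_block_diag scalar_prod_def)
  finally show "(block_diag c M * block_diag e N) $$ (i, j) = block_diag (c * e) (M * N) $$ (i, j)" .
qed (use M N in auto)

lemma transpose_block_diag: "transpose_mat (block_diag c M) = block_diag c (transpose_mat M)"
  by (rule eq_matI) (auto simp: index_block_diag)

lemma block_diag_one: "block_diag 1 (1\<^sub>m m) = (1\<^sub>m (Suc m) :: 'a :: zero_neq_one mat)"
  by (rule eq_matI) (auto simp: index_block_diag)

lemma diagonal_block_diag: "diagonal_mat M \<Longrightarrow> diagonal_mat (block_diag c M)"
  unfolding diagonal_mat_def by (auto simp: index_block_diag)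

lemma symmetric_mat_eq_block_diag:
  fixes B :: "'a :: comm_ring_1 mat"
  assumes B: "B \<in> carrier_mat (Suc m) (Suc m)" and sym: "transpose_mat B = B"
    and col0: "col B 0 = l \<cdot>\<^sub>v unit_vec (Suc m) 0"
  shows "B = block_diag l (mat m m (\<lambda>(i, j). B $$ (Suc i, Suc j)))"
proof -
  have B_sym: "B $$ (i, j) = B $$ (j, i)" if "i < Suc m" "j < Suc m" for i j
    using that B by (metis carrier_matD index_transpose_mat(1) sym)
  have B0: "B $$ (i, 0) = (if i = 0 then l else 0)" if "i < Suc m" for i
    using arg_cong[OF col0, of "\<lambda>u. u $ i"] that B by simp
  show ?thesis
  proof (rule eq_matI)
    fix i j assume "i < dim_row (block_diag l (mat m m (\<lambda>(i, j). B $$ (Suc i, Suc j))))"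
      and "j < dim_col (block_diag l (mat m m (\<lambda>(i, j). B $$ (Suc i, Suc j))))"
    then have i: "i < Suc m" and j: "j < Suc m" by auto
    then show "B $$ (i, j) = block_diag l (mat m m (\<lambda>(i, j). B $$ (Suc i, Suc j))) $$ (i, j)"
      using B0 B_sym[of 0 j] by (cases i; cases j) (auto simp: index_block_diag)
  qed (use B in auto)
qed

lemma orthogonal_congruence_first_col:
  fixes A :: "'a :: field mat"
  assumes A: "A \<in> carrier_mat n n" and W: "W \<in> carrier_mat n n"
    and WtW: "transpose_mat W * W = 1\<^sub>m n" and n: "0 < n"
    and ev: "A *\<^sub>v col W 0 = l \<cdot>\<^sub>v col W 0"
  shows "col (transpose_mat W * A * W) 0 = l \<cdot>\<^sub>v unit_vec n 0"
proof -
  have "col (transpose_mat W * A * W) 0 = (transpose_mat W * A) *\<^sub>v col W 0"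
    using A W n by (intro col_mult2) auto
  also have "\<dots> = transpose_mat W *\<^sub>v (A *\<^sub>v col W 0)"
    using A W by (intro assoc_mult_mat_vec) auto
  also have "\<dots> = transpose_mat W *\<^sub>v (l \<cdot>\<^sub>v col W 0)"
    by (simp only: ev)
  also have "\<dots> = l \<cdot>\<^sub>v (transpose_mat W *\<^sub>v col W 0)"
    using W by (intro mult_mat_vec[of _ n n]) auto
  also have "transpose_mat W *\<^sub>v col W 0 = col (transpose_mat W * W) 0"
    using W n by (intro col_mult2[symmetric]) auto
  finally show ?thesis
    using n by (simp add: WtW)
qed

lemma transpose_congruence_symmetric:
  fixes A :: "'a :: comm_semiring_0 mat"
  assumes A: "A \<in> carrier_mat n n" and W: "W \<in> carrier_mat n n" and sym: "transpose_mat A = A"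
  shows "transpose_mat (transpose_mat W * A * W) = transpose_mat W * A * W"
proof -
  have "transpose_mat (transpose_mat W * A * W) = transpose_mat W * transpose_mat (transpose_mat W * A)"
    using A W by (intro transpose_mult[of _ n n]) auto
  also have "\<dots> = transpose_mat W * (A * W)"
    using A W sym by (simp add: transpose_mult[of _ n n])
  finally show ?thesis
    using A W by (simp add: assoc_mult_mat[of _ n n _ n _ n])
qed

definition orthogonal_diagonalization :: "nat \<Rightarrow> real mat \<Rightarrow> real mat \<Rightarrow> real mat \<Rightarrow> bool" where
  "orthogonal_diagonalization n A U D \<longleftrightarrow>
     A \<in> carrier_mat n n \<and> U \<in> carrier_mat n n \<and> D \<in> carrier_mat n n \<and> diagonal_mat D \<and>
     transpose_mat U * U = 1\<^sub>m n \<and> U * transpose_mat U = 1\<^sub>m n \<and> A = U * D * transpose_mat U"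

lemma symmetric_mat_deflation:
  fixes A :: "real mat"
  assumes A: "A \<in> carrier_mat (Suc m) (Suc m)" and sym: "transpose_mat A = A"
  obtains W l C where "W \<in> carrier_mat (Suc m) (Suc m)" and "transpose_mat W * W = 1\<^sub>m (Suc m)"
    and "C \<in> carrier_mat m m" and "transpose_mat C = C" and "transpose_mat W * A * W = block_diag l C"
proof -
  let ?n = "Suc m"
  obtain l v where v: "v \<in> carrier_vec ?n" "v \<bullet> v = 1" "A *\<^sub>v v = l \<cdot>\<^sub>v v"
    using symmetric_mat_unit_eigenvector[OF A sym] by blast
  obtain W where W: "W \<in> carrier_mat ?n ?n" and WtW: "transpose_mat W * W = 1\<^sub>m ?n" and "col W 0 = v"
    using householder_reflection[OF v(1,2)] by blast
  define B where "B = transpose_mat W * A * W"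
  have B: "B \<in> carrier_mat ?n ?n" using W A by (simp add: B_def)
  have B_sym: "transpose_mat B = B"
    unfolding B_def by (rule transpose_congruence_symmetric[OF A W sym])
  moreover have "col B 0 = l \<cdot>\<^sub>v unit_vec ?n 0"
    unfolding B_def by (rule orthogonal_congruence_first_col) (use A W WtW v \<open>col W 0 = v\<close> in auto)
  ultimately have "B = block_diag l (mat m m (\<lambda>(i, j). B $$ (Suc i, Suc j)))" (is "_ = block_diag l ?C")
    using symmetric_mat_eq_block_diag[OF B] by blast
  moreover have "transpose_mat ?C = ?C"
    using B_sym B by (auto intro!: eq_matI simp: mat_eq_iff)
  ultimately show ?thesis
    using W WtW by (intro that[of W ?C l]) (simp_all add: B_def)
qed

lemma orthogonal_diagonalization_block_diag:
  fixes A :: "real mat"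
  assumes A: "A \<in> carrier_mat (Suc m) (Suc m)" and W: "W \<in> carrier_mat (Suc m) (Suc m)"
    and WtW: "transpose_mat W * W = 1\<^sub>m (Suc m)" and deflated: "transpose_mat W * A * W = block_diag l C"
    and od: "orthogonal_diagonalization m C U D"
  shows "orthogonal_diagonalization (Suc m) A (W * block_diag 1 U) (block_diag l D)"
proof -
  let ?n = "Suc m" and ?E = "block_diag 1 U" and ?D = "block_diag l D"
  from od have U: "U \<in> carrier_mat m m" and D: "D \<in> carrier_mat m m" and "diagonal_mat D"
    and UtU: "transpose_mat U * U = 1\<^sub>m m" and C: "C = U * D * transpose_mat U"
    unfolding orthogonal_diagonalization_def by auto
  have E: "?E \<in> carrier_mat ?n ?n" and D': "?D \<in> carrier_mat ?n ?n"
    using U D by simp_all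
  have WWt: "W * transpose_mat W = 1\<^sub>m ?n"
    using mat_mult_left_right_inverse[OF _ W WtW] W by simp
  have "transpose_mat (W * ?E) * (W * ?E) = transpose_mat ?E * (transpose_mat W * W) * ?E"
    using W E by (simp add: transpose_mult[OF W E] assoc_mult_mat[of _ ?n ?n _ ?n _ ?n])
  also have "\<dots> = 1\<^sub>m ?n"
    using U by (simp add: WtW UtU transpose_block_diag block_diag_mult[of _ m m _ m] block_diag_one)
  finally have orth: "transpose_mat (W * ?E) * (W * ?E) = 1\<^sub>m ?n" .
  have "W * ?E * ?D * transpose_mat (W * ?E) = W * (?E * ?D * transpose_mat ?E) * transpose_mat W"
    using W E D' by (simp add: transpose_mult[OF W E] assoc_mult_mat[of _ ?n ?n _ ?n _ ?n])
  also have "?E * ?D * transpose_mat ?E = transpose_mat W * A * W"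
    using U D by (simp add: deflated C transpose_block_diag block_diag_mult[of _ m m _ m])
  also have "W * (transpose_mat W * A * W) * transpose_mat W = (W * transpose_mat W) * A * (W * transpose_mat W)"
    using W A by (simp add: assoc_mult_mat[of _ ?n ?n _ ?n _ ?n])
  finally have "W * ?E * ?D * transpose_mat (W * ?E) = A"
    using A by (simp add: WWt)
  moreover have "W * ?E * transpose_mat (W * ?E) = 1\<^sub>m ?n"
    using mat_mult_left_right_inverse[of "transpose_mat (W * ?E)" ?n "W * ?E"] orth W E by simp
  ultimately show ?thesis
    using A W E D' orth \<open>diagonal_mat D\<close> diagonal_block_diag
    unfolding orthogonal_diagonalization_def by simp
qed

theorem symmetric_mat_orthogonal_diagonalization:
  fixes A :: "real mat"
  assumes "A \<in> carrier_mat n n" and "transpose_mat A = A"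
  shows "\<exists>U D. orthogonal_diagonalization n A U D"
  using assms
proof (induction n arbitrary: A)
  case 0
  then show ?case
    by (intro exI[of _ "1\<^sub>m 0"]) (auto simp: orthogonal_diagonalization_def diagonal_mat_def)
next
  case (Suc m A)
  obtain W l C where W: "W \<in> carrier_mat (Suc m) (Suc m)" "transpose_mat W * W = 1\<^sub>m (Suc m)"
    and C: "C \<in> carrier_mat m m" "transpose_mat C = C" and deflated: "transpose_mat W * A * W = block_diag l C"
    using symmetric_mat_deflation[OF Suc.prems] by blast
  obtain U D where "orthogonal_diagonalization m C U D"
    using Suc.IH[OF C] by blast
  then show ?case
    using orthogonal_diagonalization_block_diag[OF Suc.prems(1) W deflated] by blast
qed

section \<open>Eigenvalues and quadratic forms\<close>

lemma proots_prod_linear_factors: "proots (\<Prod>a \<leftarrow> as. [:- a, 1:]) = mset (as :: 'a :: idom list)"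
proof (induction as)
  case (Cons a as)
  have "(\<Prod>a \<leftarrow> as. [:- a, 1:]) \<noteq> 0"
    by (auto simp: prod_list_zero_iff)
  then have "proots ([:- a, 1:] * (\<Prod>a \<leftarrow> as. [:- a, 1:])) = {#a#} + mset as"
    by (subst proots_mult) (auto simp: Cons.IH)
  then show ?case
    by simp
qed simp

lemma char_poly_roots_orthogonal_diagonalization:
  assumes "orthogonal_diagonalization n A U D"
  shows "proots (char_poly A) = mset (diag_mat D)"
proof -
  from assms have A: "A \<in> carrier_mat n n" and U: "U \<in> carrier_mat n n" and D: "D \<in> carrier_mat n n"
    and diag: "diagonal_mat D" and UtU: "transpose_mat U * U = 1\<^sub>m n" and UUt: "U * transpose_mat U = 1\<^sub>m n"
    and A_eq: "A = U * D * transpose_mat U"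
    unfolding orthogonal_diagonalization_def by auto
  have "similar_mat A D"
    unfolding similar_mat_def similar_mat_wit_def
    by (rule exI[of _ U], rule exI[of _ "transpose_mat U"]) (use A U D UtU UUt A_eq in auto)
  then have "char_poly A = char_poly D"
    by (rule char_poly_similar)
  also have "\<dots> = (\<Prod>a \<leftarrow> diag_mat D. [:- a, 1:])"
    by (rule char_poly_upper_triangular[OF D]) (use diag D in \<open>auto simp: upper_triangular_def diagonal_mat_def\<close>)
  finally show ?thesis
    by (simp add: proots_prod_linear_factors)
qed

lemma diagonal_mat_mult_vec:
  assumes D: "D \<in> carrier_mat n n" and "diagonal_mat D" and z: "z \<in> carrier_vec n"
  shows "D *\<^sub>v z = vec n (\<lambda>k. D $$ (k, k) * z $ k)"
proof (rule eq_vecI)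
  fix k assume "k < dim_vec (vec n (\<lambda>k. D $$ (k, k) * z $ k))"
  then have k: "k < n" by simp
  have "(D *\<^sub>v z) $ k = (\<Sum>j = 0..<n. D $$ (k, j) * z $ j)"
    using D z k by (simp add: scalar_prod_def)
  also have "\<dots> = (\<Sum>j = 0..<n. if j = k then D $$ (k, k) * z $ k else 0)"
    by (rule sum.cong) (use assms k in \<open>auto simp: diagonal_mat_def\<close>)
  also have "\<dots> = D $$ (k, k) * z $ k"
    using k by simp
  finally show "(D *\<^sub>v z) $ k = vec n (\<lambda>k. D $$ (k, k) * z $ k) $ k"
    using k by simp
qed (use D in simp)

lemma quadratic_form_orthogonal_diagonalization:
  assumes od: "orthogonal_diagonalization n A U D" and x: "x \<in> carrier_vec n"
  defines "z \<equiv> transpose_mat U *\<^sub>v x"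
  shows "x \<bullet> (A *\<^sub>v x) = (\<Sum>k = 0..<n. D $$ (k, k) * (z $ k)\<^sup>2)"
    and "x \<bullet> x = (\<Sum>k = 0..<n. (z $ k)\<^sup>2)"
proof -
  from od have U: "U \<in> carrier_mat n n" and D: "D \<in> carrier_mat n n" and "diagonal_mat D"
    and UUt: "U * transpose_mat U = 1\<^sub>m n" and A: "A = U * D * transpose_mat U"
    unfolding orthogonal_diagonalization_def by auto
  have z: "z \<in> carrier_vec n" using U x by (simp add: z_def)
  have xU: "x \<bullet> (U *\<^sub>v w) = z \<bullet> w" if "w \<in> carrier_vec n" for w
    using transpose_vec_mult_scalar[OF U that x] by (simp add: z_def)
  have "x \<bullet> (A *\<^sub>v x) = z \<bullet> (D *\<^sub>v z)"
    using U D x z by (simp add: A z_def xU assoc_mult_mat_vec[of _ n n _ n])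
  also have "\<dots> = (\<Sum>k = 0..<n. z $ k * (D $$ (k, k) * z $ k))"
    using z by (simp add: diagonal_mat_mult_vec[OF D \<open>diagonal_mat D\<close> z] scalar_prod_def)
  finally show "x \<bullet> (A *\<^sub>v x) = (\<Sum>k = 0..<n. D $$ (k, k) * (z $ k)\<^sup>2)"
    by (simp add: power2_eq_square mult_ac)
  have "U *\<^sub>v z = (U * transpose_mat U) *\<^sub>v x"
    using U x by (simp add: z_def)
  then have "x = U *\<^sub>v z"
    using x by (simp add: UUt)
  then have "x \<bullet> x = z \<bullet> z"
    using xU[OF z] by simp
  then show "x \<bullet> x = (\<Sum>k = 0..<n. (z $ k)\<^sup>2)"
    using z by (simp add: scalar_prod_self_eq_sum_squares)
qed

lemma trace_orthogonal_diagonalization: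
  assumes od: "orthogonal_diagonalization n A U D"
  shows "(\<Sum>i = 0..<n. A $$ (i, i)) = (\<Sum>k = 0..<n. D $$ (k, k))"
proof -
  from od have A: "A \<in> carrier_mat n n" and U: "U \<in> carrier_mat n n"
    and UtU: "transpose_mat U * U = 1\<^sub>m n"
    unfolding orthogonal_diagonalization_def by auto
  have "A $$ (i, i) = (\<Sum>k = 0..<n. D $$ (k, k) * (U $$ (i, k))\<^sup>2)" if i: "i < n" for i
  proof -
    have "(transpose_mat U *\<^sub>v unit_vec n i) $ k = U $$ (i, k)" if "k < n" for k
      using U i that by (simp add: scalar_prod_right_unit)
    moreover have "unit_vec n i \<bullet> (A *\<^sub>v unit_vec n i) = A $$ (i, i)"
      using A i by simp
    ultimately show ?thesis
      using quadratic_form_orthogonal_diagonalization(1)[OF od, of "unit_vec n i"] i by simp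
  qed
  moreover have "(\<Sum>i = 0..<n. (U $$ (i, k))\<^sup>2) = 1" if k: "k < n" for k
  proof -
    have "(transpose_mat U * U) $$ (k, k) = (\<Sum>i = 0..<n. (U $$ (i, k))\<^sup>2)"
      using U k by (simp add: scalar_prod_def power2_eq_square)
    then show ?thesis
      using UtU k by simp
  qed
  ultimately have "(\<Sum>i = 0..<n. A $$ (i, i)) = (\<Sum>i = 0..<n. \<Sum>k = 0..<n. D $$ (k, k) * (U $$ (i, k))\<^sup>2)"
    by simp
  also have "\<dots> = (\<Sum>k = 0..<n. \<Sum>i = 0..<n. D $$ (k, k) * (U $$ (i, k))\<^sup>2)"
    by (rule sum.swap)
  also have "\<dots> = (\<Sum>k = 0..<n. D $$ (k, k))"
    by (rule sum.cong) (simp_all add: \<open>\<And>k. k < n \<Longrightarrow> (\<Sum>i = 0..<n. (U $$ (i, k))\<^sup>2) = 1\<close> flip: sum_distrib_left)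
  finally show ?thesis .
qed

lemma diagonal_mat_mult_index:
  assumes D: "D \<in> carrier_mat n n" and "diagonal_mat D" and M: "M \<in> carrier_mat n n"
    and i: "i < n" and j: "j < n"
  shows "(D * M) $$ (i, j) = D $$ (i, i) * M $$ (i, j)"
proof -
  have "(D * M) $$ (i, j) = (D *\<^sub>v col M j) $ i"
    using D M i j by simp
  then show ?thesis
    using assms by (simp add: diagonal_mat_mult_vec)
qed

lemma orthogonal_diagonalization_square:
  assumes od: "orthogonal_diagonalization n A U D"
  shows "orthogonal_diagonalization n (A * A) U (D * D)"
    and "k < n \<Longrightarrow> (D * D) $$ (k, k) = (D $$ (k, k))\<^sup>2"
proof -
  from od have A: "A \<in> carrier_mat n n" and U: "U \<in> carrier_mat n n" and D: "D \<in> carrier_mat n n"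
    and diag: "diagonal_mat D" and UtU: "transpose_mat U * U = 1\<^sub>m n"
    and UUt: "U * transpose_mat U = 1\<^sub>m n" and A_eq: "A = U * D * transpose_mat U"
    unfolding orthogonal_diagonalization_def by auto
  have Ut: "transpose_mat U \<in> carrier_mat n n"
    using U by simp
  show "(D * D) $$ (k, k) = (D $$ (k, k))\<^sup>2" if "k < n"
    using diagonal_mat_mult_index[OF D diag D that that] by (simp add: power2_eq_square)
  have "(D * D) $$ (i, j) = 0" if "i < n" "j < n" "i \<noteq> j" for i j
    using diagonal_mat_mult_index[OF D diag D that(1,2)] diag D that unfolding diagonal_mat_def by simp
  then have "diagonal_mat (D * D)"
    using D unfolding diagonal_mat_def by simp
  moreover have "A * A = U * D * (transpose_mat U * U) * D * transpose_mat U"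
    unfolding A_eq using U D Ut by (simp add: assoc_mult_mat[of _ n n _ n _ n])
  then have "A * A = U * (D * D) * transpose_mat U"
    unfolding UtU using U D Ut by (simp add: assoc_mult_mat[of _ n n _ n _ n])
  ultimately show "orthogonal_diagonalization n (A * A) U (D * D)"
    using A U D Ut UtU UUt unfolding orthogonal_diagonalization_def by (simp add: mult_carrier_mat[of _ n n _ n])
qed

lemma char_poly_roots_symmetric:
  fixes A :: "real mat"
  assumes "A \<in> carrier_mat n n" and "transpose_mat A = A"
  shows "size (proots (char_poly A)) = n"
    and "sum_mset (proots (char_poly A)) = (\<Sum>i = 0..<n. A $$ (i, i))"
    and "sum_mset (image_mset (\<lambda>a. a\<^sup>2) (proots (char_poly A))) = (\<Sum>i = 0..<n. (A * A) $$ (i, i))"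
proof -
  obtain U D where od: "orthogonal_diagonalization n A U D"
    using symmetric_mat_orthogonal_diagonalization[OF assms] by blast
  then have D: "D \<in> carrier_mat n n"
    unfolding orthogonal_diagonalization_def by auto
  have roots: "proots (char_poly A) = image_mset (\<lambda>k. D $$ (k, k)) (mset_set {0..<n})"
    using char_poly_roots_orthogonal_diagonalization[OF od] D by (simp add: diag_mat_def)
  show "size (proots (char_poly A)) = n"
    by (simp add: roots)
  show "sum_mset (proots (char_poly A)) = (\<Sum>i = 0..<n. A $$ (i, i))"
    by (simp add: roots trace_orthogonal_diagonalization[OF od] flip: sum_unfold_sum_mset)
  have "sum_mset (image_mset (\<lambda>a. a\<^sup>2) (proots (char_poly A))) = (\<Sum>k = 0..<n. (D * D) $$ (k, k))"
    by (simp add: roots orthogonal_diagonalization_square(2)[OF od] multiset.map_comp o_def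
        flip: sum_unfold_sum_mset)
  also have "\<dots> = (\<Sum>i = 0..<n. (A * A) $$ (i, i))"
    by (simp add: trace_orthogonal_diagonalization[OF orthogonal_diagonalization_square(1)[OF od]])
  finally show "sum_mset (image_mset (\<lambda>a. a\<^sup>2) (proots (char_poly A))) = (\<Sum>i = 0..<n. (A * A) $$ (i, i))" .
qed

lemma char_poly_root_le_if_quadratic_form_le:
  fixes A :: "real mat"
  assumes A: "A \<in> carrier_mat n n"
    and bound: "\<And>x. x \<in> carrier_vec n \<Longrightarrow> x \<bullet> (A *\<^sub>v x) \<le> c * (x \<bullet> x)"
    and a: "a \<in># proots (char_poly A)"
  shows "a \<le> c"
proof -
  have "char_poly A \<noteq> 0"
    using a by auto
  then have "eigenvalue A a"
    using a eigenvalue_root_char_poly[OF A] by simp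
  then obtain v where "eigenvector A v a"
    unfolding eigenvalue_def by blast
  then have v: "v \<in> carrier_vec n" "v \<noteq> 0\<^sub>v n" and Av: "A *\<^sub>v v = a \<cdot>\<^sub>v v"
    using A unfolding eigenvector_def by auto
  have "a * (v \<bullet> v) \<le> c * (v \<bullet> v)"
    using bound[OF v(1)] v(1) by (simp add: Av)
  then show ?thesis
    using scalar_prod_self_gt_0[OF v] by simp
qed

lemma quadratic_form_shift_orthogonal_diagonalization:
  assumes od: "orthogonal_diagonalization n A U D" and x: "x \<in> carrier_vec n"
  shows "x \<bullet> (A *\<^sub>v x) - c * (x \<bullet> x) = (\<Sum>k = 0..<n. (D $$ (k, k) - c) * ((transpose_mat U *\<^sub>v x) $ k)\<^sup>2)"
  unfolding quadratic_form_orthogonal_diagonalization[OF od x]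
  by (simp add: algebra_simps sum_subtractf sum_distrib_left)

lemma ex_char_poly_root_ge_if_quadratic_form_ge:
  fixes A :: "real mat"
  assumes A: "A \<in> carrier_mat n n" and sym: "transpose_mat A = A"
    and x: "x \<in> carrier_vec n" and x0: "x \<noteq> 0\<^sub>v n" and bound: "c * (x \<bullet> x) \<le> x \<bullet> (A *\<^sub>v x)"
  shows "\<exists>a \<in># proots (char_poly A). c \<le> a"
proof (rule ccontr)
  assume neg: "\<not> ?thesis"
  obtain U D where od: "orthogonal_diagonalization n A U D"
    using symmetric_mat_orthogonal_diagonalization[OF A sym] by blast
  then have D: "D \<in> carrier_mat n n"
    unfolding orthogonal_diagonalization_def by auto
  have "\<forall>k \<in> {0..<n}. \<not> c \<le> D $$ (k, k)"
    using neg D by (simp add: char_poly_roots_orthogonal_diagonalization[OF od] diag_mat_def)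
  then have "D $$ (k, k) < c" if "k < n" for k
    using that by force
  define z where "z = transpose_mat U *\<^sub>v x"
  have "0 < (\<Sum>k = 0..<n. (z $ k)\<^sup>2)"
    using quadratic_form_orthogonal_diagonalization(2)[OF od x] scalar_prod_self_gt_0[OF x x0]
    by (simp add: z_def)
  then obtain k where k: "k \<in> {0..<n}" "(z $ k)\<^sup>2 \<noteq> 0"
    by (metis less_irrefl sum.neutral)
  have "0 < (\<Sum>j = 0..<n. (c - D $$ (j, j)) * (z $ j)\<^sup>2)"
    using k \<open>\<And>k. k < n \<Longrightarrow> D $$ (k, k) < c\<close>
    by (intro sum_pos2[of _ k]) (auto intro!: mult_nonneg_nonneg simp: less_imp_le)
  also have "\<dots> = - (\<Sum>j = 0..<n. (D $$ (j, j) - c) * (z $ j)\<^sup>2)"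
    by (subst sum_negf[symmetric]) (simp add: algebra_simps)
  also have "\<dots> = c * (x \<bullet> x) - x \<bullet> (A *\<^sub>v x)"
    using quadratic_form_shift_orthogonal_diagonalization[OF od x, of c] by (simp add: z_def)
  finally show False
    using bound by simp
qed

lemma quadratic_form_ge_if_entrywise_ge:
  fixes A :: "real mat"
  assumes A: "A \<in> carrier_mat n n" and x: "x \<in> carrier_vec n"
    and ge: "\<And>i. i < n \<Longrightarrow> 0 \<le> x $ i \<and> c * x $ i \<le> (A *\<^sub>v x) $ i"
  shows "c * (x \<bullet> x) \<le> x \<bullet> (A *\<^sub>v x)"
proof -
  have "c * (x \<bullet> x) = (\<Sum>i = 0..<n. x $ i * (c * x $ i))"
    using x by (simp add: scalar_prod_def sum_distrib_left mult_ac)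
  also have "\<dots> \<le> (\<Sum>i = 0..<n. x $ i * (A *\<^sub>v x) $ i)"
    using ge by (intro sum_mono mult_left_mono) auto
  also have "\<dots> = x \<bullet> (A *\<^sub>v x)"
    unfolding scalar_prod_def using x A by (simp del: index_mult_mat_vec)
  finally show ?thesis .
qed

lemma sum_two_points:
  fixes g :: "'a \<Rightarrow> 'b :: comm_monoid_add"
  assumes "finite A" "k \<in> A" "l \<in> A" "k \<noteq> l" "\<And>j. j \<in> A \<Longrightarrow> j \<noteq> k \<Longrightarrow> j \<noteq> l \<Longrightarrow> g j = 0"
  shows "sum g A = g k + g l"
proof -
  have "sum g A = sum g {k, l}"
    by (rule sum.mono_neutral_right) (use assms in auto)
  then show ?thesis
    using assms(4) by simp
qed

lemma ex_nontrivial_vanishing_combination: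
  fixes a b :: "'a :: comm_ring_1"
  obtains \<alpha> \<beta> where "\<alpha> \<noteq> 0 \<or> \<beta> \<noteq> 0" and "\<alpha> * a + \<beta> * b = 0"
proof (cases "a = 0")
  case True
  then show ?thesis by (intro that[of 1 0]) simp_all
next
  case False
  then show ?thesis by (intro that[of b "- a"]) (simp_all add: mult.commute)
qed

definition two_point_vec :: "nat \<Rightarrow> nat \<Rightarrow> nat \<Rightarrow> 'a \<Rightarrow> 'a \<Rightarrow> 'a :: zero vec" where
  "two_point_vec n k l \<alpha> \<beta> = vec n (\<lambda>j. if j = k then \<alpha> else if j = l then \<beta> else 0)"

lemma two_point_vec_carrier [simp]: "two_point_vec n k l \<alpha> \<beta> \<in> carrier_vec n"
  by (simp add: two_point_vec_def)

lemma dim_two_point_vec [simp]: "dim_vec (two_point_vec n k l \<alpha> \<beta>) = n"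
  by (simp add: two_point_vec_def)

lemma index_two_point_vec [simp]:
  "j < n \<Longrightarrow> two_point_vec n k l \<alpha> \<beta> $ j = (if j = k then \<alpha> else if j = l then \<beta> else 0)"
  by (simp add: two_point_vec_def)

lemma scalar_prod_two_point_vec:
  fixes w :: "'a :: comm_semiring_0 vec"
  assumes "w \<in> carrier_vec n" "k < n" "l < n" "k \<noteq> l"
  shows "w \<bullet> two_point_vec n k l \<alpha> \<beta> = w $ k * \<alpha> + w $ l * \<beta>"
  unfolding scalar_prod_def using assms
  by (subst sum_two_points[of _ k l]) auto

lemma size_char_poly_roots_gt_le_1_if_quadratic_form_le_on_hyperplane:
  fixes A :: "real mat"
  assumes A: "A \<in> carrier_mat n n" and sym: "transpose_mat A = A" and p: "p < n"
    and bound: "\<And>x. x \<in> carrier_vec n \<Longrightarrow> x $ p = 0 \<Longrightarrow> x \<bullet> (A *\<^sub>v x) \<le> c * (x \<bullet> x)"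
  shows "size (filter_mset (\<lambda>a. c < a) (proots (char_poly A))) \<le> 1"
proof -
  obtain U D where od: "orthogonal_diagonalization n A U D"
    using symmetric_mat_orthogonal_diagonalization[OF A sym] by blast
  then have U: "U \<in> carrier_mat n n" and D: "D \<in> carrier_mat n n" and UtU: "transpose_mat U * U = 1\<^sub>m n"
    unfolding orthogonal_diagonalization_def by auto
  have "k = l" if k: "k < n" "c < D $$ (k, k)" and l: "l < n" "c < D $$ (l, l)" for k l
  proof (rule ccontr)
    assume kl: "k \<noteq> l"
    \<comment> \<open>some combination of the \<open>k\<close>-th and \<open>l\<close>-th eigenvectors lies in the hyperplane\<close>
    obtain \<alpha> \<beta> where nz: "\<alpha> \<noteq> 0 \<or> \<beta> \<noteq> 0" and comb: "\<alpha> * U $$ (p, k) + \<beta> * U $$ (p, l) = 0"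
      by (rule ex_nontrivial_vanishing_combination)
    define z where "z = two_point_vec n k l \<alpha> \<beta>"
    define x where "x = U *\<^sub>v z"
    have x: "x \<in> carrier_vec n" using U by (simp add: x_def z_def)
    have "transpose_mat U *\<^sub>v x = (transpose_mat U * U) *\<^sub>v z"
      using U by (simp add: x_def z_def)
    then have z: "transpose_mat U *\<^sub>v x = z"
      by (simp add: UtU z_def)
    have "x $ p = row U p \<bullet> z"
      using U p by (simp add: x_def)
    also have "\<dots> = 0"
      using U p k l kl comb by (simp add: z_def scalar_prod_two_point_vec mult.commute)
    finally have "x $ p = 0" .
    have "0 < (D $$ (k, k) - c) * \<alpha>\<^sup>2 + (D $$ (l, l) - c) * \<beta>\<^sup>2"
      using k l nz by (auto intro: add_pos_nonneg add_nonneg_pos)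
    also have "\<dots> = (\<Sum>j = 0..<n. (D $$ (j, j) - c) * (z $ j)\<^sup>2)"
      using k l kl by (subst sum_two_points[of _ k l]) (auto simp: z_def)
    also have "\<dots> = x \<bullet> (A *\<^sub>v x) - c * (x \<bullet> x)"
      using quadratic_form_shift_orthogonal_diagonalization[OF od x] by (simp add: z)
    finally show False
      using bound[OF x \<open>x $ p = 0\<close>] by simp
  qed
  then have "card {k \<in> {0..<n}. c < D $$ (k, k)} \<le> Suc 0"
    by (subst card_le_Suc0_iff_eq) auto
  then show ?thesis
    using D by (simp add: char_poly_roots_orthogonal_diagonalization[OF od] diag_mat_def filter_mset_image_mset)
qed

lemma ex_quadratic_form_le_on_coordinate_plane:
  fixes A :: "real mat"
  assumes A: "A \<in> carrier_mat n n" and sym: "transpose_mat A = A"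
    and one: "size (filter_mset (\<lambda>a. c < a) (proots (char_poly A))) \<le> 1"
    and u: "u < n" and v: "v < n" and uv: "u \<noteq> v"
  obtains \<alpha> \<beta> where "\<alpha> \<noteq> 0 \<or> \<beta> \<noteq> 0"
    and "two_point_vec n u v \<alpha> \<beta> \<bullet> (A *\<^sub>v two_point_vec n u v \<alpha> \<beta>) \<le> c * (two_point_vec n u v \<alpha> \<beta> \<bullet> two_point_vec n u v \<alpha> \<beta>)"
proof -
  obtain U D where od: "orthogonal_diagonalization n A U D"
    using symmetric_mat_orthogonal_diagonalization[OF A sym] by blast
  then have U: "U \<in> carrier_mat n n" and D: "D \<in> carrier_mat n n"
    unfolding orthogonal_diagonalization_def by auto
  have "card {k \<in> {0..<n}. c < D $$ (k, k)} \<le> Suc 0"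
    using one D by (simp add: char_poly_roots_orthogonal_diagonalization[OF od] diag_mat_def filter_mset_image_mset)
  then have "\<forall>k1 k2. k1 < n \<and> c < D $$ (k1, k1) \<longrightarrow> k2 < n \<and> c < D $$ (k2, k2) \<longrightarrow> k1 = k2"
    by (subst (asm) card_le_Suc0_iff_eq) auto
  then obtain k0 where k0: "\<And>k. k < n \<Longrightarrow> c < D $$ (k, k) \<Longrightarrow> k = k0"
    by blast
  \<comment> \<open>\<open>x\<close> is orthogonal to the only eigenvector whose eigenvalue can exceed \<open>c\<close>\<close>
  obtain \<alpha> \<beta> where nz: "\<alpha> \<noteq> 0 \<or> \<beta> \<noteq> 0" and comb: "U $$ (u, k0) * \<alpha> + U $$ (v, k0) * \<beta> = 0"
    by (rule ex_nontrivial_vanishing_combination[of "U $$ (u, k0)" "U $$ (v, k0)"]) (auto simp: mult.commute)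
  define x where "x = two_point_vec n u v \<alpha> \<beta>"
  have x: "x \<in> carrier_vec n" by (simp add: x_def)
  have "(D $$ (j, j) - c) * ((transpose_mat U *\<^sub>v x) $ j)\<^sup>2 \<le> 0" if j: "j < n" for j
  proof (cases "c < D $$ (j, j)")
    case True
    then have "j = k0" using k0 j by blast
    then have "(transpose_mat U *\<^sub>v x) $ j = col U k0 \<bullet> x"
      using U j by simp
    also have "\<dots> = 0"
      using U u v uv \<open>j = k0\<close> j comb by (simp add: x_def scalar_prod_two_point_vec)
    finally show ?thesis by simp
  qed (simp add: mult_nonpos_nonneg)
  then have "x \<bullet> (A *\<^sub>v x) - c * (x \<bullet> x) \<le> 0"
    unfolding quadratic_form_shift_orthogonal_diagonalization[OF od x] by (intro sum_nonpos) simp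
  then show ?thesis
    using nz by (intro that[of \<alpha> \<beta>]) (simp_all add: x_def)
qed

section \<open>The signless Laplacian\<close>

definition adj :: "graph \<Rightarrow> nat \<Rightarrow> nat \<Rightarrow> real" where
  "adj G i j = (if snd G i j then 1 else 0)"

lemma simple_graph_sym: "simple_graph G \<Longrightarrow> snd G j i = snd G i j"
  unfolding simple_graph_def by blast

lemma simple_graph_irrefl: "simple_graph G \<Longrightarrow> \<not> snd G i i"
  unfolding simple_graph_def by blast

lemma Q_matrix_carrier [simp]: "Q_matrix G \<in> carrier_mat (fst G) (fst G)"
  by (simp add: Q_matrix_def)

lemma dim_Q_matrix [simp]: "dim_row (Q_matrix G) = fst G" "dim_col (Q_matrix G) = fst G"
  by (simp_all add: Q_matrix_def)

lemma index_Q_matrix: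
  "i < fst G \<Longrightarrow> j < fst G \<Longrightarrow> Q_matrix G $$ (i, j) = adj G i j + (if i = j then real (degree G i) else 0)"
  by (simp add: Q_matrix_def adj_def)

lemma transpose_Q_matrix: "simple_graph G \<Longrightarrow> transpose_mat (Q_matrix G) = Q_matrix G"
  by (rule eq_matI) (auto simp: Q_matrix_def simple_graph_sym)

lemma degree_eq_sum_adj: "real (degree G i) = (\<Sum>j = 0..<fst G. adj G i j)"
proof -
  have "(\<Sum>j = 0..<fst G. adj G i j) = real (card ({0..<fst G} \<inter> {j. snd G i j}))"
    unfolding adj_def by (simp add: sum.If_cases)
  also have "{0..<fst G} \<inter> {j. snd G i j} = {j. j < fst G \<and> snd G i j}"
    by auto
  finally show ?thesis
    by (simp add: degree_def)
qed

lemma Q_matrix_mult_vec_index: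
  assumes x: "x \<in> carrier_vec (fst G)" and i: "i < fst G"
  shows "(Q_matrix G *\<^sub>v x) $ i = real (degree G i) * x $ i + (\<Sum>j = 0..<fst G. adj G i j * x $ j)"
proof -
  have "(Q_matrix G *\<^sub>v x) $ i = (\<Sum>j = 0..<fst G. Q_matrix G $$ (i, j) * x $ j)"
    using x i by (simp add: scalar_prod_def)
  also have "\<dots> = (\<Sum>j = 0..<fst G. adj G i j * x $ j + (if j = i then real (degree G i) * x $ j else 0))"
    using i by (intro sum.cong refl) (auto simp: index_Q_matrix algebra_simps)
  finally show ?thesis
    using i by (simp add: sum.distrib)
qed

lemma Q_matrix_quadratic_form:
  assumes x: "x \<in> carrier_vec (fst G)"
  shows "x \<bullet> (Q_matrix G *\<^sub>v x) = (\<Sum>i = 0..<fst G. real (degree G i) * (x $ i)\<^sup>2)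
     + (\<Sum>i = 0..<fst G. \<Sum>j = 0..<fst G. adj G i j * x $ i * x $ j)"
proof -
  have "x \<bullet> (Q_matrix G *\<^sub>v x) = (\<Sum>i = 0..<fst G. x $ i * (Q_matrix G *\<^sub>v x) $ i)"
    unfolding scalar_prod_def using x by (simp del: index_mult_mat_vec)
  also have "\<dots> = (\<Sum>i = 0..<fst G. x $ i * (real (degree G i) * x $ i + (\<Sum>j = 0..<fst G. adj G i j * x $ j)))"
    using x by (intro sum.cong refl) (simp add: Q_matrix_mult_vec_index del: index_mult_mat_vec)
  finally show ?thesis
    by (simp add: sum.distrib sum_distrib_left algebra_simps power2_eq_square)
qed

lemma trace_Q_matrix:
  assumes "simple_graph G"
  shows "(\<Sum>i = 0..<fst G. Q_matrix G $$ (i, i)) = (\<Sum>i = 0..<fst G. real (degree G i))"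
  using assms by (intro sum.cong refl) (simp add: index_Q_matrix adj_def simple_graph_irrefl)

lemma trace_Q_matrix_square:
  assumes G: "simple_graph G"
  shows "(\<Sum>i = 0..<fst G. (Q_matrix G * Q_matrix G) $$ (i, i)) =
     (\<Sum>i = 0..<fst G. (real (degree G i))\<^sup>2 + real (degree G i))"
proof (rule sum.cong[OF refl])
  fix i assume "i \<in> {0..<fst G}"
  then have i: "i < fst G" by simp
  have "(Q_matrix G * Q_matrix G) $$ (i, i) = (\<Sum>j = 0..<fst G. Q_matrix G $$ (i, j) * Q_matrix G $$ (j, i))"
    using i by (simp add: scalar_prod_def)
  also have "\<dots> = (\<Sum>j = 0..<fst G. adj G i j + (if j = i then (real (degree G i))\<^sup>2 else 0))"
    using i G by (intro sum.cong refl)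
      (auto simp: index_Q_matrix adj_def simple_graph_sym simple_graph_irrefl power2_eq_square)
  also have "\<dots> = (real (degree G i))\<^sup>2 + real (degree G i)"
    using i by (simp add: sum.distrib degree_eq_sum_adj)
  finally show "(Q_matrix G * Q_matrix G) $$ (i, i) = (real (degree G i))\<^sup>2 + real (degree G i)" .
qed

lemma Q_spectrum_moments:
  assumes G: "simple_graph G"
  shows "size (Q_spectrum G) = fst G"
    and "sum_mset (Q_spectrum G) = real (sum_mset (degree_mset G))"
    and "sum_mset (image_mset (\<lambda>a. a\<^sup>2) (Q_spectrum G)) =
      real (sum_mset (image_mset (\<lambda>d. d\<^sup>2) (degree_mset G))) + real (sum_mset (degree_mset G))"
  using char_poly_roots_symmetric[OF Q_matrix_carrier transpose_Q_matrix[OF G]]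
    trace_Q_matrix[OF G] trace_Q_matrix_square[OF G]
  by (simp_all add: Q_spectrum_def degree_mset_def sum.distrib multiset.map_comp o_def flip: sum_unfold_sum_mset)

lemma Q_cospectral_degree_moments:
  assumes G: "simple_graph G" and H: "simple_graph H" and spec: "Q_spectrum H = Q_spectrum G"
  shows "fst H = fst G"
    and "sum_mset (degree_mset H) = sum_mset (degree_mset G)"
    and "sum_mset (image_mset (\<lambda>d. d\<^sup>2) (degree_mset H)) = sum_mset (image_mset (\<lambda>d. d\<^sup>2) (degree_mset G))"
  using Q_spectrum_moments[OF G] Q_spectrum_moments[OF H] spec by (metis of_nat_eq_iff add_right_cancel)+

lemma sum_quadratic_form_le_weighted:
  fixes a :: "nat \<Rightarrow> nat \<Rightarrow> real" and w x :: "nat \<Rightarrow> real"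
  assumes sym: "\<And>i j. i \<in> I \<Longrightarrow> j \<in> I \<Longrightarrow> a i j = a j i" and nonneg: "\<And>i j. 0 \<le> a i j"
    and w: "\<And>i. 0 < w i"
  shows "(\<Sum>i \<in> I. \<Sum>j \<in> I. a i j * x i * x j) \<le> (\<Sum>i \<in> I. (\<Sum>j \<in> I. a i j * w j / w i) * (x i)\<^sup>2)"
proof -
  have am_gm: "a i j * x i * x j \<le> (a i j * (w j / w i) * (x i)\<^sup>2 + a i j * (w i / w j) * (x j)\<^sup>2) / 2" for i j
  proof -
    have "0 \<le> (w j * x i - w i * x j)\<^sup>2 / (w i * w j)"
      using w[of i] w[of j] by simp
    also have "\<dots> = (w j / w i) * (x i)\<^sup>2 + (w i / w j) * (x j)\<^sup>2 - 2 * x i * x j"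
      using w[of i] w[of j] by (simp add: field_simps power2_eq_square)
    finally have "a i j * (2 * x i * x j) \<le> a i j * ((w j / w i) * (x i)\<^sup>2 + (w i / w j) * (x j)\<^sup>2)"
      by (intro mult_left_mono nonneg) simp
    then show ?thesis
      by (simp add: algebra_simps)
  qed
  have "(\<Sum>i \<in> I. \<Sum>j \<in> I. a i j * x i * x j) \<le>
      (\<Sum>i \<in> I. \<Sum>j \<in> I. (a i j * (w j / w i) * (x i)\<^sup>2 + a i j * (w i / w j) * (x j)\<^sup>2) / 2)"
    by (intro sum_mono am_gm)
  also have "\<dots> = ((\<Sum>i \<in> I. \<Sum>j \<in> I. a i j * (w j / w i) * (x i)\<^sup>2)
      + (\<Sum>i \<in> I. \<Sum>j \<in> I. a i j * (w i / w j) * (x j)\<^sup>2)) / 2"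
    by (simp only: sum_divide_distrib[symmetric] sum.distrib)
  also have "(\<Sum>i \<in> I. \<Sum>j \<in> I. a i j * (w i / w j) * (x j)\<^sup>2) = (\<Sum>i \<in> I. \<Sum>j \<in> I. a i j * (w j / w i) * (x i)\<^sup>2)"
    by (subst sum.swap) (intro sum.cong refl, simp add: sym)
  finally show ?thesis
    by (simp add: sum_distrib_right)
qed

lemma Q_matrix_quadratic_form_le_if_weighted_row_sums_le:
  assumes G: "simple_graph G" and w: "\<And>i. 0 < w i"
    and rows: "\<And>i. i < fst G \<Longrightarrow> real (degree G i) + (\<Sum>j = 0..<fst G. adj G i j * w j) / w i \<le> c"
    and x: "x \<in> carrier_vec (fst G)"
  shows "x \<bullet> (Q_matrix G *\<^sub>v x) \<le> c * (x \<bullet> x)"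
proof -
  have "(\<Sum>i = 0..<fst G. \<Sum>j = 0..<fst G. adj G i j * x $ i * x $ j)
      \<le> (\<Sum>i = 0..<fst G. (\<Sum>j = 0..<fst G. adj G i j * w j / w i) * (x $ i)\<^sup>2)"
    using G w by (intro sum_quadratic_form_le_weighted) (auto simp: adj_def simple_graph_sym)
  then have "x \<bullet> (Q_matrix G *\<^sub>v x)
      \<le> (\<Sum>i = 0..<fst G. (real (degree G i) + (\<Sum>j = 0..<fst G. adj G i j * w j) / w i) * (x $ i)\<^sup>2)"
    unfolding Q_matrix_quadratic_form[OF x] by (simp add: sum.distrib algebra_simps sum_divide_distrib)
  also have "\<dots> \<le> (\<Sum>i = 0..<fst G. c * (x $ i)\<^sup>2)"
    using rows by (intro sum_mono mult_right_mono) auto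
  also have "\<dots> = c * (x \<bullet> x)"
    using x by (simp add: scalar_prod_self_eq_sum_squares sum_distrib_left)
  finally show ?thesis .
qed

lemma Q_matrix_quadratic_form_two_point_vec:
  fixes \<alpha> \<beta> :: real
  assumes G: "simple_graph G" and u: "u < fst G" and v: "v < fst G" and uv: "u \<noteq> v"
  defines "x \<equiv> two_point_vec (fst G) u v \<alpha> \<beta>"
  shows "x \<bullet> (Q_matrix G *\<^sub>v x) =
    real (degree G u) * \<alpha>\<^sup>2 + real (degree G v) * \<beta>\<^sup>2 + 2 * adj G u v * \<alpha> * \<beta>"
proof -
  have x: "x \<in> carrier_vec (fst G)" by (simp add: x_def)
  have xu: "x $ u = \<alpha>" and xv: "x $ v = \<beta>"
    using u v uv by (simp_all add: x_def)
  have row: "(\<Sum>j = 0..<fst G. adj G i j * x $ j) = adj G i u * \<alpha> + adj G i v * \<beta>" for i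
    using u v uv by (subst sum_two_points[of _ u v]) (auto simp: x_def)
  have "x \<bullet> (Q_matrix G *\<^sub>v x) = (Q_matrix G *\<^sub>v x) \<bullet> x"
    using x by (intro comm_scalar_prod[of _ "fst G"] mult_mat_vec_carrier[OF Q_matrix_carrier])
  also have "\<dots> = (Q_matrix G *\<^sub>v x) $ u * \<alpha> + (Q_matrix G *\<^sub>v x) $ v * \<beta>"
    unfolding x_def using u v uv
    by (intro scalar_prod_two_point_vec mult_mat_vec_carrier[OF Q_matrix_carrier]) simp_all
  also have "\<dots> = real (degree G u) * \<alpha>\<^sup>2 + real (degree G v) * \<beta>\<^sup>2 + 2 * adj G u v * \<alpha> * \<beta>"
    unfolding Q_matrix_mult_vec_index[OF x u] Q_matrix_mult_vec_index[OF x v] row xu xv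
    using G by (simp add: adj_def simple_graph_irrefl simple_graph_sym[of G v u] algebra_simps power2_eq_square)
  finally show ?thesis .
qed

lemma eq_if_degrees_gt_and_one_Q_eigenvalue_gt:
  assumes G: "simple_graph G" and one: "size (filter_mset (\<lambda>a. c < a) (Q_spectrum G)) \<le> 1"
    and u: "u < fst G" and v: "v < fst G"
    and du: "c + 1 < real (degree G u)" and dv: "c + 1 < real (degree G v)"
  shows "u = v"
proof (rule ccontr)
  assume uv: "u \<noteq> v"
  obtain \<alpha> \<beta> where nz: "\<alpha> \<noteq> 0 \<or> \<beta> \<noteq> 0" and le:
    "two_point_vec (fst G) u v \<alpha> \<beta> \<bullet> (Q_matrix G *\<^sub>v two_point_vec (fst G) u v \<alpha> \<beta>)
      \<le> c * (two_point_vec (fst G) u v \<alpha> \<beta> \<bullet> two_point_vec (fst G) u v \<alpha> \<beta>)"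
    using ex_quadratic_form_le_on_coordinate_plane[OF Q_matrix_carrier transpose_Q_matrix[OF G] _ u v uv] one
    unfolding Q_spectrum_def by blast
  have "- (\<alpha>\<^sup>2 + \<beta>\<^sup>2) \<le> 2 * adj G u v * \<alpha> * \<beta>"
    using sum_squares_bound[of \<alpha> \<beta>] sum_squares_bound[of \<alpha> "- \<beta>"] by (auto simp: adj_def)
  moreover have "0 < (real (degree G u) - 1 - c) * \<alpha>\<^sup>2 + (real (degree G v) - 1 - c) * \<beta>\<^sup>2"
    using nz du dv by (auto intro: add_pos_nonneg add_nonneg_pos)
  ultimately show False
    using le u v uv
    by (simp add: Q_matrix_quadratic_form_two_point_vec[OF G u v uv] scalar_prod_two_point_vec algebra_simps power2_eq_square)
qed

lemma sum_adj_mult_weight_one_vertex: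
  assumes h: "h < fst G"
  shows "(\<Sum>j = 0..<fst G. adj G i j * (if j = h then 1 else e)) = e * real (degree G i) + (1 - e) * adj G i h"
proof -
  have "(\<Sum>j = 0..<fst G. adj G i j * (if j = h then 1 else e))
      = (\<Sum>j = 0..<fst G. e * adj G i j + (if j = h then (1 - e) * adj G i h else 0))"
    by (intro sum.cong refl) (auto simp: algebra_simps)
  then show ?thesis
    using h by (simp add: sum.distrib degree_eq_sum_adj sum_distrib_left)
qed

lemma dominating_weight_arith:
  fixes m :: real
  assumes "24 \<le> m"
  shows "(m - 2) * (1 + 1 / (m - 1/4 - 11)) \<le> m - 1/4"
proof -
  have pos: "0 < m - 1/4 - 11" using assms by simp
  have "(m - 1/4) * (m - 1/4 - 11) - (m - 2) * (m - 1/4 - 10) = 3/4 * m - 283/16"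
    by (simp add: field_simps)
  then have "(m - 2) * (m - 1/4 - 10) \<le> (m - 1/4) * (m - 1/4 - 11)"
    using assms by linarith
  moreover have "(m - 2) * (1 + 1 / (m - 1/4 - 11)) = (m - 2) * (m - 1/4 - 10) / (m - 1/4 - 11)"
    using pos by (simp add: field_simps)
  ultimately show ?thesis
    using pos by (simp add: pos_divide_le_eq)
qed

lemma Q_matrix_quadratic_form_le_if_one_high_degree_vertex:
  assumes G: "simple_graph G" and n: "24 \<le> fst G" and h: "h < fst G"
    and dh: "degree G h \<le> fst G - 2" and small: "\<And>i. i < fst G \<Longrightarrow> i \<noteq> h \<Longrightarrow> degree G i \<le> 6"
    and x: "x \<in> carrier_vec (fst G)"
  shows "x \<bullet> (Q_matrix G *\<^sub>v x) \<le> (real (fst G) - 1/4) * (x \<bullet> x)"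
proof -
  define c where "c = real (fst G) - 1/4"
  define e where "e = 1 / (c - 11)"
  \<comment> \<open>\<open>e\<close> is chosen so that the rows off \<open>h\<close> are bounded by \<open>2 \<cdot> 6 + (1/e - 1) = c\<close>\<close>
  define w where "w j = (if j = h then 1 else e)" for j
  have e: "0 < e" and inv_e: "1 / e = c - 11"
    using n by (simp_all add: e_def c_def)
  have row_w: "(\<Sum>j = 0..<fst G. adj G i j * w j) = e * real (degree G i) + (1 - e) * adj G i h" for i
    unfolding w_def by (rule sum_adj_mult_weight_one_vertex[OF h])
  have rows: "real (degree G i) + (\<Sum>j = 0..<fst G. adj G i j * w j) / w i \<le> c" if i: "i < fst G" for i
  proof (cases "i = h")
    case True
    have "real (degree G h) + (\<Sum>j = 0..<fst G. adj G h j * w j) / w h = real (degree G h) * (1 + e)"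
      unfolding row_w using G by (simp add: w_def adj_def simple_graph_irrefl algebra_simps)
    also have "\<dots> \<le> (real (fst G) - 2) * (1 + e)"
      using dh n e by (intro mult_right_mono) auto
    also have "\<dots> \<le> c"
      unfolding c_def e_def using n by (intro dominating_weight_arith) simp
    finally show ?thesis using True by simp
  next
    case False
    have "real (degree G i) + (\<Sum>j = 0..<fst G. adj G i j * w j) / w i = 2 * real (degree G i) + adj G i h * (1 / e - 1)"
      unfolding row_w using False e by (simp add: w_def field_simps)
    also have "\<dots> \<le> 2 * 6 + 1 * (1 / e - 1)"
      using small[OF i False] inv_e n by (intro add_mono mult_right_mono) (auto simp: adj_def c_def)
    also have "\<dots> = c"
      by (simp add: inv_e)
    finally show ?thesis .
  qed
  have "\<And>j. 0 < w j"
    using e by (simp add: w_def)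
  from Q_matrix_quadratic_form_le_if_weighted_row_sums_le[OF G this rows x] show ?thesis
    by (simp add: c_def)
qed

lemma Q_spectrum_lt_order_if_one_high_degree_vertex:
  assumes G: "simple_graph G" and n: "24 \<le> fst G" and h: "h < fst G"
    and dh: "degree G h \<le> fst G - 2" and small: "\<And>i. i < fst G \<Longrightarrow> i \<noteq> h \<Longrightarrow> degree G i \<le> 6"
    and a: "a \<in># Q_spectrum G"
  shows "a < real (fst G)"
  using char_poly_root_le_if_quadratic_form_le[OF Q_matrix_carrier
      Q_matrix_quadratic_form_le_if_one_high_degree_vertex[OF G n h dh small]] a
  by (fastforce simp: Q_spectrum_def)

lemma degree_le_order_minus_1:
  assumes G: "simple_graph G" and i: "i < fst G"
  shows "degree G i \<le> fst G - 1"
proof -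
  have "{j. j < fst G \<and> snd G i j} \<subseteq> {0..<fst G} - {i}"
    using G unfolding simple_graph_def by auto
  then have "degree G i \<le> card ({0..<fst G} - {i})"
    unfolding degree_def by (intro card_mono) auto
  then show ?thesis
    using i by simp
qed

lemma ex_dominating_vertex_if_Q_eigenvalue_bounds:
  assumes G: "simple_graph G" and n: "24 \<le> fst G"
    and big: "\<exists>a \<in># Q_spectrum G. real (fst G) \<le> a"
    and one: "size (filter_mset (\<lambda>a. 5 < a) (Q_spectrum G)) \<le> 1"
  shows "\<exists>h < fst G. degree G h = fst G - 1"
proof (rule ccontr)
  assume no_dominating: "\<not> ?thesis"
  have le: "degree G i \<le> fst G - 2" if i: "i < fst G" for i
  proof -
    have "degree G i \<noteq> fst G - 1"
      using no_dominating i by blast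
    with degree_le_order_minus_1[OF G i] show ?thesis
      by linarith
  qed
  have unique: "i = j" if "i < fst G" "j < fst G" "7 \<le> degree G i" "7 \<le> degree G j" for i j
    by (rule eq_if_degrees_gt_and_one_Q_eigenvalue_gt[OF G one that(1,2)]) (use that in simp_all)
  obtain h where h: "h < fst G" and others: "\<And>i. i < fst G \<Longrightarrow> i \<noteq> h \<Longrightarrow> degree G i \<le> 6"
  proof (cases "\<exists>h < fst G. 7 \<le> degree G h")
    case True
    then obtain h where h: "h < fst G" "7 \<le> degree G h"
      by blast
    have "degree G i \<le> 6" if "i < fst G" "i \<noteq> h" for i
      using unique[OF that(1) h(1) _ h(2)] that(2) by (cases "7 \<le> degree G i") simp_all
    with h show ?thesis
      by (intro that[of h]) simp_all
  next
    case False
    then show ?thesis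
      using n by (intro that[of 0]) auto
  qed
  obtain a where a: "a \<in># Q_spectrum G" and "real (fst G) \<le> a"
    using big by blast
  moreover have "a < real (fst G)"
    by (rule Q_spectrum_lt_order_if_one_high_degree_vertex[OF G n h le[OF h] others a])
  ultimately show False
    by simp
qed

section \<open>Joining a vertex to a graph\<close>

lemma fst_join_K1 [simp]: "fst (join_K1 U) = Suc (fst U)"
  by (simp add: join_K1_def)

lemma simple_graph_join_K1: "simple_graph U \<Longrightarrow> simple_graph (join_K1 U)"
  unfolding simple_graph_def join_K1_def by fastforce

lemma degree_join_K1_0: "degree (join_K1 U) 0 = fst U"
proof -
  have "{j. j < Suc (fst U) \<and> snd (join_K1 U) 0 j} = {1..fst U}"
    by (auto simp: join_K1_def)
  then show ?thesis
    by (simp add: degree_def)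
qed

lemma degree_join_K1_Suc:
  assumes k: "k < fst U"
  shows "degree (join_K1 U) (Suc k) = Suc (degree U k)"
proof -
  have "{j. j < Suc (fst U) \<and> snd (join_K1 U) (Suc k) j} = insert 0 (Suc ` {j. j < fst U \<and> snd U k j})"
    using k by (auto simp: join_K1_def image_iff gr0_conv_Suc)
  then show ?thesis
    by (simp add: degree_def card_image)
qed

lemma adj_join_K1:
  "adj (join_K1 U) 0 0 = 0"
  "l < fst U \<Longrightarrow> adj (join_K1 U) 0 (Suc l) = 1"
  "k < fst U \<Longrightarrow> adj (join_K1 U) (Suc k) 0 = 1"
  "adj (join_K1 U) (Suc k) (Suc l) = adj U k l"
  by (auto simp: adj_def join_K1_def)

lemma ex_Q_eigenvalue_join_K1_ge_order:
  assumes U: "simple_graph U" and m: "0 < fst U"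
  shows "\<exists>a \<in># Q_spectrum (join_K1 U). real (fst (join_K1 U)) \<le> a"
proof -
  let ?m = "fst U" and ?Q = "Q_matrix (join_K1 U)"
  \<comment> \<open>the Perron vector of the star on \<open>m + 1\<close> vertices, whose Q-index is \<open>m + 1\<close>\<close>
  define x where "x = vec (Suc ?m) (\<lambda>i. if i = 0 then real ?m else 1)"
  have x: "x \<in> carrier_vec (fst (join_K1 U))" by (simp add: x_def)
  have x0: "x $ 0 = real ?m" and xS: "\<And>k. k < ?m \<Longrightarrow> x $ Suc k = 1"
    by (simp_all add: x_def)
  have Qx: "(?Q *\<^sub>v x) $ i = real (degree (join_K1 U) i) * x $ i
      + adj (join_K1 U) i 0 * x $ 0 + (\<Sum>l = 0..<?m. adj (join_K1 U) i (Suc l) * x $ Suc l)" if "i < Suc ?m" for i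
    unfolding Q_matrix_mult_vec_index[OF x that[folded fst_join_K1]] fst_join_K1 sum.atLeast0_lessThan_Suc_shift
    by (simp only: add.assoc o_def)
  have "real (Suc ?m) * x $ i \<le> (?Q *\<^sub>v x) $ i" if i: "i < Suc ?m" for i
  proof (cases i)
    case 0
    then show ?thesis
      using Qx[OF i] by (simp add: x0 xS adj_join_K1 degree_join_K1_0 algebra_simps del: index_mult_mat_vec)
  next
    case (Suc k)
    then have "k < ?m" using i by simp
    moreover have "0 \<le> (\<Sum>l = 0..<?m. adj U k l)"
      by (intro sum_nonneg) (simp add: adj_def)
    ultimately show ?thesis
      using Qx[OF i] Suc by (simp add: x0 xS adj_join_K1 degree_join_K1_Suc del: index_mult_mat_vec)
  qed
  then have "real (fst (join_K1 U)) * (x \<bullet> x) \<le> x \<bullet> (?Q *\<^sub>v x)"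
    by (intro quadratic_form_ge_if_entrywise_ge[OF Q_matrix_carrier x]) (auto simp: x_def)
  moreover have "x \<noteq> 0\<^sub>v (fst (join_K1 U))"
    using m x0 by auto
  ultimately show ?thesis
    using ex_char_poly_root_ge_if_quadratic_form_ge[OF Q_matrix_carrier transpose_Q_matrix x]
      simple_graph_join_K1[OF U] by (simp add: Q_spectrum_def)
qed

lemma Q_matrix_join_K1_quadratic_form_le_off_apex:
  assumes U: "simple_graph U" and deg: "\<And>i. i < fst U \<Longrightarrow> degree U i \<le> \<Delta>"
    and x: "x \<in> carrier_vec (fst (join_K1 U))" and x0: "x $ 0 = 0"
  shows "x \<bullet> (Q_matrix (join_K1 U) *\<^sub>v x) \<le> (2 * real \<Delta> + 1) * (x \<bullet> x)"
proof -
  let ?m = "fst U"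
  define y where "y k = x $ Suc k" for k
  have degrees: "(\<Sum>i = 0..<fst (join_K1 U). real (degree (join_K1 U) i) * (x $ i)\<^sup>2)
      = (\<Sum>k = 0..<?m. (1 + real (degree U k)) * (y k)\<^sup>2)"
    unfolding fst_join_K1 sum.atLeast0_lessThan_Suc_shift by (simp add: x0 y_def degree_join_K1_Suc)
  have "(\<Sum>i = 0..<fst (join_K1 U). \<Sum>j = 0..<fst (join_K1 U). adj (join_K1 U) i j * x $ i * x $ j)
      = (\<Sum>k = 0..<?m. \<Sum>l = 0..<?m. adj U k l * y k * y l)"
    unfolding fst_join_K1 sum.atLeast0_lessThan_Suc_shift by (simp add: x0 y_def adj_join_K1)
  also have "\<dots> \<le> (\<Sum>k = 0..<?m. (\<Sum>l = 0..<?m. adj U k l * 1 / 1) * (y k)\<^sup>2)"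
    using U by (intro sum_quadratic_form_le_weighted) (auto simp: adj_def simple_graph_sym)
  also have "\<dots> = (\<Sum>k = 0..<?m. real (degree U k) * (y k)\<^sup>2)"
    by (simp add: degree_eq_sum_adj)
  finally have "x \<bullet> (Q_matrix (join_K1 U) *\<^sub>v x)
      \<le> (\<Sum>k = 0..<?m. (1 + real (degree U k)) * (y k)\<^sup>2) + (\<Sum>k = 0..<?m. real (degree U k) * (y k)\<^sup>2)"
    unfolding Q_matrix_quadratic_form[OF x] degrees by linarith
  also have "\<dots> = (\<Sum>k = 0..<?m. (1 + 2 * real (degree U k)) * (y k)\<^sup>2)"
    by (simp add: algebra_simps flip: sum.distrib)
  also have "\<dots> \<le> (\<Sum>k = 0..<?m. (2 * real \<Delta> + 1) * (y k)\<^sup>2)"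
    using deg by (intro sum_mono mult_right_mono) auto
  also have "\<dots> = (2 * real \<Delta> + 1) * (x \<bullet> x)"
    using x unfolding scalar_prod_self_eq_sum_squares[OF x] fst_join_K1 sum.atLeast0_lessThan_Suc_shift
    by (simp add: x0 y_def sum_distrib_left)
  finally show ?thesis .
qed

lemma size_Q_spectrum_join_K1_gt_le_1:
  assumes U: "simple_graph U" and deg: "\<And>i. i < fst U \<Longrightarrow> degree U i \<le> \<Delta>"
  shows "size (filter_mset (\<lambda>a. 2 * real \<Delta> + 1 < a) (Q_spectrum (join_K1 U))) \<le> 1"
  unfolding Q_spectrum_def
  by (rule size_char_poly_roots_gt_le_1_if_quadratic_form_le_on_hyperplane[OF Q_matrix_carrier
        transpose_Q_matrix[OF simple_graph_join_K1[OF U]], of 0])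
    (auto intro: Q_matrix_join_K1_quadratic_form_le_off_apex[OF U deg])

section \<open>Disjoint unions of cycles and edges\<close>

lemma fst_disj_union [simp]: "fst (disj_union G1 G2) = fst G1 + fst G2"
  by (simp add: disj_union_def)

lemma fst_union_list: "fst (union_list Gs) = sum_list (map fst Gs)"
  by (induction Gs) (simp_all add: union_list_def empty_graph_def)

lemma simple_graph_disj_union:
  assumes G1: "simple_graph G1" and G2: "simple_graph G2"
  shows "simple_graph (disj_union G1 G2)"
  unfolding simple_graph_def
proof (intro allI impI)
  fix i j assume "snd (disj_union G1 G2) i j"
  then consider "i < fst G1" "j < fst G1" "snd G1 i j"
    | "fst G1 \<le> i" "fst G1 \<le> j" "snd G2 (i - fst G1) (j - fst G1)"
    by (auto simp: disj_union_def)
  then show "i < fst (disj_union G1 G2) \<and> j < fst (disj_union G1 G2) \<and> i \<noteq> j \<and> snd (disj_union G1 G2) j i"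
  proof cases
    case 1
    with G1 have "i \<noteq> j" "snd G1 j i"
      unfolding simple_graph_def by blast+
    with 1 show ?thesis
      by (auto simp: disj_union_def)
  next
    case 2
    with G2 have "i - fst G1 < fst G2" "j - fst G1 < fst G2" "i - fst G1 \<noteq> j - fst G1"
        "snd G2 (j - fst G1) (i - fst G1)"
      unfolding simple_graph_def by blast+
    with 2 show ?thesis
      by (auto simp: disj_union_def)
  qed
qed

lemma simple_graph_union_list: "(\<And>G. G \<in> set Gs \<Longrightarrow> simple_graph G) \<Longrightarrow> simple_graph (union_list Gs)"
proof (induction Gs)
  case Nil
  then show ?case
    by (simp add: union_list_def empty_graph_def simple_graph_def)
next
  case (Cons G Gs)
  then show ?case
    using simple_graph_disj_union[of G "union_list Gs"] by (simp add: union_list_def)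
qed

lemma simple_graph_cycle_graph:
  assumes "3 \<le> s"
  shows "simple_graph (cycle_graph s)"
proof -
  have "Suc i mod s \<noteq> i" if "i < s" for i
    using that assms by (cases "Suc i = s") auto
  then show ?thesis
    unfolding simple_graph_def cycle_graph_def by fastforce
qed

lemma simple_graph_K2: "simple_graph K2"
  by (auto simp: simple_graph_def K2_def)

lemma degree_disj_union:
  "degree (disj_union G1 G2) i = (if i < fst G1 then degree G1 i else degree G2 (i - fst G1))"
proof (cases "i < fst G1")
  case True
  then have "{j. j < fst G1 + fst G2 \<and> snd (disj_union G1 G2) i j} = {j. j < fst G1 \<and> snd G1 i j}"
    by (auto simp: disj_union_def)
  then show ?thesis
    using True by (simp add: degree_def)
next
  case False
  have "{j. j < fst G1 + fst G2 \<and> snd (disj_union G1 G2) i j}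
      = (\<lambda>j. j + fst G1) ` {j. j < fst G2 \<and> snd G2 (i - fst G1) j}" (is "?L = ?R")
  proof (intro equalityI subsetI)
    fix j assume "j \<in> ?L"
    then show "j \<in> ?R"
      using False by (auto simp: disj_union_def intro!: image_eqI[of _ _ "j - fst G1"])
  next
    fix j assume "j \<in> ?R"
    then show "j \<in> ?L"
      using False by (auto simp: disj_union_def)
  qed
  then show ?thesis
    using False by (simp add: degree_def card_image)
qed

lemma degree_union_list_mem:
  assumes "\<And>G i. G \<in> set Gs \<Longrightarrow> i < fst G \<Longrightarrow> degree G i \<in> S" and "i < fst (union_list Gs)"
  shows "degree (union_list Gs) i \<in> S"
  using assms
proof (induction Gs arbitrary: i)
  case (Cons G Gs)
  then show ?case
    by (simp add: union_list_def degree_disj_union[unfolded fst_disj_union] flip: fst_union_list[unfolded union_list_def])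
qed (simp add: union_list_def empty_graph_def)

lemma fst_cycle_graph [simp]: "fst (cycle_graph s) = s"
  by (simp add: cycle_graph_def)

lemma fst_K2 [simp]: "fst K2 = 2"
  by (simp add: K2_def)

lemma degree_cycle_graph:
  assumes s: "3 \<le> s" and i: "i < s"
  shows "degree (cycle_graph s) i = 2"
proof -
  define a where "a = (if i + 1 = s then 0 else i + 1)"
  define b where "b = (if i = 0 then s - 1 else i - 1)"
  have "{j. j < s \<and> snd (cycle_graph s) i j} = {a, b}"
  proof (intro equalityI subsetI)
    fix j assume "j \<in> {j. j < s \<and> snd (cycle_graph s) i j}"
    then have "j < s" and "j = (i + 1) mod s \<or> i = (j + 1) mod s"
      by (auto simp: cycle_graph_def)
    then show "j \<in> {a, b}"
      using i by (cases "i + 1 = s"; cases "j + 1 = s") (auto simp: a_def b_def)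
  next
    fix j assume "j \<in> {a, b}"
    then show "j \<in> {j. j < s \<and> snd (cycle_graph s) i j}"
      using i s by (cases "i + 1 = s"; cases "i = 0") (auto simp: a_def b_def cycle_graph_def)
  qed
  moreover have "a \<noteq> b"
    using i s by (auto simp: a_def b_def)
  ultimately show ?thesis
    by (simp add: degree_def cycle_graph_def)
qed

lemma degree_K2: "i < 2 \<Longrightarrow> degree K2 i = 1"
proof -
  assume "i < 2"
  then have "{j. j < 2 \<and> snd K2 i j} = {1 - i}"
    by (cases "i = 0") (auto simp: K2_def)
  then show ?thesis
    by (simp add: degree_def K2_def)
qed

lemma degree_union_cycles_K2:
  assumes "\<forall>s \<in> set ss. 3 \<le> s" and "i < fst (union_list (map cycle_graph ss @ replicate q K2))"
  shows "degree (union_list (map cycle_graph ss @ replicate q K2)) i \<in> {1, 2}"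
  using assms(2)
proof (rule degree_union_list_mem[rotated])
  fix F j assume "F \<in> set (map cycle_graph ss @ replicate q K2)" and "j < fst F"
  then show "degree F j \<in> {1, 2}"
    using assms(1) by (auto simp: degree_cycle_graph degree_K2)
qed

section \<open>Degree multisets\<close>

lemma size_degree_mset [simp]: "size (degree_mset G) = fst G"
  by (simp add: degree_mset_def)

lemma degree_mset_join_K1: "degree_mset (join_K1 U) = add_mset (fst U) (image_mset Suc (degree_mset U))"
proof -
  have "[0..<fst (join_K1 U)] = 0 # map Suc [0..<fst U]"
    by (simp add: upt_conv_Cons map_Suc_upt)
  moreover have "map (degree (join_K1 U) \<circ> Suc) [0..<fst U] = map (Suc \<circ> degree U) [0..<fst U]"
    by (intro map_cong) (auto simp: degree_join_K1_Suc)
  ultimately show ?thesis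
    unfolding degree_mset_def by (simp add: degree_join_K1_0 flip: map_map)
qed

lemma size_sum_mset_two_values:
  assumes "set_mset M \<subseteq> {a, Suc a}"
  shows "size M = count M a + count M (Suc a)" and "sum_mset M = a * size M + count M (Suc a)"
  using assms by (induction M) auto

lemma mset_eq_if_moments_eq:
  fixes A B :: "nat multiset"
  assumes B: "set_mset B \<subseteq> {a, Suc a}" and size: "size A = size B"
    and sum: "sum_mset A = sum_mset B"
    and sum_sq: "sum_mset (image_mset (\<lambda>x. x\<^sup>2) A) = sum_mset (image_mset (\<lambda>x. x\<^sup>2) B)"
  shows "A = B"
proof -
  define f :: "nat \<Rightarrow> int" where "f x = (int x - int a) * (int x - int a - 1)" for x
  have f_nonneg: "0 \<le> f x" for x
    unfolding f_def by (cases "x \<le> a") (auto intro: mult_nonpos_nonpos)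
  have f_eq_0: "f x = 0 \<longleftrightarrow> x \<in> {a, Suc a}" for x
    by (auto simp: f_def)
  have f_sum: "sum_mset (image_mset f M) = int (sum_mset (image_mset (\<lambda>x. x\<^sup>2) M))
      - (2 * int a + 1) * int (sum_mset M) + int a * (int a + 1) * int (size M)" for M
    by (induction M) (auto simp: f_def algebra_simps power2_eq_square)
  have "sum_mset (image_mset f B) = 0"
    using B by (intro sum_mset.neutral) (auto simp: f_eq_0)
  then have sum_f_A: "sum_mset (image_mset f A) = 0"
    using f_sum[of A] f_sum[of B] size sum sum_sq by simp
  have A: "set_mset A \<subseteq> {a, Suc a}"
  proof
    fix x assume "x \<in># A"
    then obtain A' where "A = add_mset x A'"
      by (metis multi_member_split)
    moreover have "0 \<le> sum_mset (image_mset f A')"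
      using sum_mset_mono[of A' "\<lambda>_. 0" f] f_nonneg by simp
    ultimately have "f x \<le> 0"
      using sum_f_A by simp
    then show "x \<in> {a, Suc a}"
      using f_nonneg[of x] f_eq_0[of x] by simp
  qed
  have "count A (Suc a) = count B (Suc a)" and "count A a = count B a"
    using size_sum_mset_two_values[OF A] size_sum_mset_two_values[OF B] size sum by simp_all
  moreover have "count A x = 0" "count B x = 0" if "x \<notin> {a, Suc a}" for x
    using A B that by (auto simp: count_eq_zero_iff)
  ultimately show ?thesis
    by (intro multiset_eqI) (metis insertE singletonD)
qed

lemma degree_mset_eq_if_Q_cospectral_join_K1:
  assumes U: "simple_graph U" and deg_U: "\<And>i. i < fst U \<Longrightarrow> degree U i \<in> {1, 2}"
    and m: "23 \<le> fst U" and H: "simple_graph H" and spec: "Q_spectrum H = Q_spectrum (join_K1 U)"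
  shows "degree_mset H = degree_mset (join_K1 U)"
proof -
  note moments = Q_cospectral_degree_moments[OF simple_graph_join_K1[OF U] H spec]
  have "degree U i \<le> 2" if "i < fst U" for i
    using deg_U[OF that] by auto
  from size_Q_spectrum_join_K1_gt_le_1[OF U this]
  have "size (filter_mset (\<lambda>a. 5 < a) (Q_spectrum H)) \<le> 1"
    by (simp add: spec)
  then have "\<exists>h < fst H. degree H h = fst H - 1"
    using ex_dominating_vertex_if_Q_eigenvalue_bounds[OF H] m ex_Q_eigenvalue_join_K1_ge_order[OF U]
    by (simp add: moments(1) spec)
  then obtain h where "h < fst H" "degree H h = fst U"
    using moments(1) by auto
  then have "fst U \<in># degree_mset H"
    by (auto simp: degree_mset_def intro!: image_eqI[of _ _ h])
  then obtain R where dH: "degree_mset H = add_mset (fst U) R"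
    by (metis multi_member_split)
  note dG = degree_mset_join_K1[of U]
  have "size R = fst U"
    using arg_cong[OF dH, of size] moments(1) by simp
  have "R = image_mset Suc (degree_mset U)"
  proof (rule mset_eq_if_moments_eq)
    show "set_mset (image_mset Suc (degree_mset U)) \<subseteq> {2, Suc 2}"
      using deg_U by (fastforce simp: degree_mset_def)
  qed (use moments dH dG \<open>size R = fst U\<close> in simp_all)
  then show ?thesis
    using dH dG by simp
qed

theorem lemma5p3:
  fixes t q n :: nat and ss :: "nat list" and G H :: graph
  assumes "t \<ge> 2" and "q \<ge> 1" and "length ss = t" and "\<forall>s \<in> set ss. s \<ge> 3"
    and "G = join_K1 (union_list (map cycle_graph ss @ replicate q K2))"
    and "n = fst G"
    and "simple_graph H"
    and "Q_spectrum H = Q_spectrum G"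
    and "n \<ge> 52 \<or> q \<ge> 12"
  shows "degree_mset H = degree_mset G"
proof -
  define U where "U = union_list (map cycle_graph ss @ replicate q K2)"
  have U: "simple_graph U"
    using assms(4) by (auto simp: U_def intro!: simple_graph_union_list simple_graph_cycle_graph simple_graph_K2)
  have "3 * length ss \<le> sum_list ss"
    using assms(4) by (induction ss) auto
  then have "23 \<le> fst U"
    using assms(1,3,5,6,9) by (simp add: U_def fst_union_list sum_list_replicate comp_def) arith
  then show ?thesis
    using degree_mset_eq_if_Q_cospectral_join_K1[OF U _ _ assms(7)] degree_union_cycles_K2[OF assms(4)] assms(5,8)
    by (simp add: U_def)
qed

end
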